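(* For all complex $t$ with $0<|t|<1$, \[ \frac{1}{t^2}\left(1-\frac{1}{\binom{2t}{t}}\right)=\sum_{n=0}^{\infty}(-1)^n\frac{I_n}{n!}\,t^n, \] where $I_n:=\iint_T \frac{(-\ln xy)^n}{xy}\,dx\,dy$.
   Context: $T:=\{(x,y)\in[0,1]^2 : x+y\ge 1\}$. The generalized binomial coefficient is $\binom{s}{t}:=\frac{\Gamma(s+1)}{\Gamma(t+1)\Gamma(s-t+1)}$, so $\binom{2t}{t}=\Gamma(2t+1)/\Gamma(t+1)^2$. *)

theory Defs
  imports "HOL-Analysis.Analysis"
begin

definition gbinom :: "complex \<Rightarrow> complex \<Rightarrow> complex" where
  "gbinom s t = Gamma (s + 1) / (Gamma (t + 1) * Gamma (s - t + 1))"

definition Tri :: "(real \<times> real) set" where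
  "Tri = {(x, y). 0 \<le> x \<and> x \<le> 1 \<and> 0 \<le> y \<and> y \<le> 1 \<and> x + y \<ge> 1}"

definition Icoef :: "nat \<Rightarrow> real" where
  "Icoef n = (LINT p:Tri|lborel. (- ln (fst p * snd p)) ^ n / (fst p * snd p))"

end

theory Submission
  imports Defs
begin

text \<open>
  Proof strategy.  For \<open>0 < |t| < 1\<close> put \<open>K_t(x,y) = (xy)^(t-1)\<close> on the triangle \<open>T\<close>.

  Expanding \<open>(xy)^t = exp (t ln (xy))\<close> gives
      \<open>K_t = \<Sum>_n (-1)^n t^n/n! \<cdot> (-ln xy)^n/(xy)\<close> pointwise; all partial sums are
      dominated by \<open>(xy)^(-1-|t|)\<close>, which is integrable on \<open>T\<close> (it is bounded by a
      product of two real Beta densities), so dominated convergence turns the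
      series of the \<open>I_n\<close> into \<open>\<integral>_T K_t\<close>.
  (2) Closed form.  By Fubini, integrating out \<open>y \<in> [1-x,1]\<close> first,
      \<open>\<integral>_T K_t = (1/t) \<integral>_0^1 x^(t-1) (1 - (1-x)^t) dx\<close>, and an antiderivative
      shows this equals \<open>(1 - (2t+1) B(t+1,t+1)) / t^2 = (1 - 1/binom(2t,t))/t^2\<close>.
  The library only provides the Beta integral for real parameters, so we first
  prove Euler's integral \<open>\<integral>_0^1 x^(a-1) (1-x)^(b-1) dx = B(a,b)\<close> for complex \<open>a, b\<close>
  with positive real parts, via the recurrence in \<open>b\<close> and Gauss's limit
  \<open>n^a \<integral>_0^1 x^(a-1) (1-x)^(b+n-1) dx \<longrightarrow> \<Gamma>(a)\<close>.
\<close>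

lemma norm_of_real_powr: "x \<ge> 0 \<Longrightarrow> norm (complex_of_real x powr w) = x powr Re w"
  by (simp add: norm_powr_real_powr)

lemma norm_one_minus_of_real_powr:
  "x \<le> 1 \<Longrightarrow> norm ((1 - complex_of_real x) powr w) = (1 - x) powr Re w"
  using norm_of_real_powr[of "1 - x" w] by simp

lemma powr_eq_mult_powr_minus_one: "(z::complex) powr c = z * z powr (c - 1)"
  by (metis powr_add powr_to_1 diff_add_cancel mult.commute)

lemma of_real_powr_eq_exp: "x > 0 \<Longrightarrow> complex_of_real x powr w = exp (w * complex_of_real (ln x))"
  by (simp add: powr_def Ln_of_real)

text \<open>Approaching \<open>0\<close> from the right along the reals is a way of approaching \<open>0\<close> in \<open>\<complex>\<close>;
  this transfers complex difference quotients to one-sided real limits.\<close>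
lemma filterlim_of_real_at_right_0: "filterlim (\<lambda>x::real. complex_of_real x) (at 0) (at_right 0)"
proof -
  have "((\<lambda>x::real. complex_of_real x) \<longlongrightarrow> complex_of_real 0) (at_right 0)"
    by (intro tendsto_intros)
  moreover have "eventually (\<lambda>x::real. complex_of_real x \<noteq> 0) (at_right 0)"
    using eventually_at_right_less[of "0::real"] by eventually_elim auto
  ultimately show ?thesis unfolding filterlim_at by auto
qed

section \<open>Euler's Beta integral for complex parameters\<close>

definition beta_integral :: "complex \<Rightarrow> complex \<Rightarrow> complex" where
  "beta_integral a b =
     integral {0..1} (\<lambda>x::real. complex_of_real x powr (a - 1) * (1 - complex_of_real x) powr (b - 1))"

text \<open>The integrand is dominated by the real Beta density with exponents \<open>Re a, Re b\<close>.\<close>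
lemma beta_integrand_absolutely_integrable:
  assumes "Re a > 0" "Re b > 0"
  shows "(\<lambda>x::real. complex_of_real x powr (a - 1) * (1 - complex_of_real x) powr (b - 1))
           absolutely_integrable_on {0..1}"
proof -
  have "(\<lambda>x::real. complex_of_real x powr (a - 1) * (1 - complex_of_real x) powr (b - 1))
           absolutely_integrable_on {0<..<1}"
  proof (rule measurable_bounded_by_integrable_imp_absolutely_integrable)
    show "(\<lambda>x::real. complex_of_real x powr (a - 1) * (1 - complex_of_real x) powr (b - 1))
       \<in> borel_measurable (lebesgue_on {0<..<1})"
      by (intro continuous_imp_measurable_on_sets_lebesgue continuous_intros) auto
    show "(\<lambda>x. x powr (Re a - 1) * (1 - x) powr (Re b - 1)) integrable_on {0<..<1}"
      using integrable_Beta'[of "Re a" "Re b"] assms by (simp add: integrable_on_Icc_iff_Ioo)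
    fix x :: real assume "x \<in> {0<..<1}"
    then show "norm (complex_of_real x powr (a - 1) * (1 - complex_of_real x) powr (b - 1))
          \<le> x powr (Re a - 1) * (1 - x) powr (Re b - 1)"
      by (simp add: norm_mult norm_of_real_powr norm_one_minus_of_real_powr)
  qed auto
  then show ?thesis by (simp add: absolutely_integrable_on_Icc_iff_Ioo)
qed

lemma beta_integral_has_integral:
  assumes "Re a > 0" "Re b > 0"
  shows "((\<lambda>x::real. complex_of_real x powr (a - 1) * (1 - complex_of_real x) powr (b - 1))
           has_integral beta_integral a b) {0..1}"
  unfolding beta_integral_def
  using set_lebesgue_integral_eq_integral(1)[OF beta_integrand_absolutely_integrable[OF assms]]
  by (simp add: has_integral_integral)

text \<open>The recurrence \<open>(a + b) B(a, b+1) = b B(a, b)\<close>, by integrating the derivative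
  of \<open>x^a (1-x)^b\<close>, which vanishes at both end points.\<close>
lemma beta_integral_plus1_right:
  assumes a: "Re a > 0" and b: "Re b > 0"
  shows "(a + b) * beta_integral a (b + 1) = b * beta_integral a b"
proof -
  let ?F = "\<lambda>x::real. complex_of_real x powr a * (1 - complex_of_real x) powr b"
  let ?E0 = "\<lambda>x::real. complex_of_real x powr (a - 1) * (1 - complex_of_real x) powr (b - 1)"
  let ?E1 = "\<lambda>x::real. complex_of_real x powr (a - 1) * (1 - complex_of_real x) powr (b + 1 - 1)"
  have b1: "Re (b + 1) > 0" using b by simp
  have "((\<lambda>x. (a + b) * ?E1 x - b * ?E0 x) has_integral
          ((a + b) * beta_integral a (b + 1) - b * beta_integral a b)) {0..1}"
    by (intro has_integral_diff has_integral_mult_right beta_integral_has_integral a b b1)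
  moreover have "((\<lambda>x. (a + b) * ?E1 x - b * ?E0 x) has_integral (?F 1 - ?F 0)) {0..1}"
  proof (rule fundamental_theorem_of_calculus_interior)
    show "continuous_on {0..1} ?F"
      using a b by (intro continuous_intros) auto
    fix x :: real assume x: "x \<in> {0<..<1}"
    have nz: "complex_of_real x \<notin> \<real>\<^sub>\<le>\<^sub>0" "1 - complex_of_real x \<notin> \<real>\<^sub>\<le>\<^sub>0"
      using x by (auto simp: complex_nonpos_Reals_iff)
    have "((\<lambda>z. z powr a * (1 - z) powr b) has_field_derivative
          (a * complex_of_real x powr (a - 1) * (1 - complex_of_real x) powr b
           - b * complex_of_real x powr a * (1 - complex_of_real x) powr (b - 1))) (at (complex_of_real x))"
      using nz by (auto intro!: derivative_eq_intros simp: algebra_simps)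
    moreover have "a * complex_of_real x powr (a - 1) * (1 - complex_of_real x) powr b
           - b * complex_of_real x powr a * (1 - complex_of_real x) powr (b - 1)
         = (a + b) * ?E1 x - b * ?E0 x"
    proof -
      have "(1 - complex_of_real x) powr b = (1 - complex_of_real x) * (1 - complex_of_real x) powr (b - 1)"
           "complex_of_real x powr a = complex_of_real x * complex_of_real x powr (a - 1)"
        by (rule powr_eq_mult_powr_minus_one)+
      moreover have "b + 1 - 1 = b" by simp
      ultimately show ?thesis by (simp only:) (simp add: algebra_simps)
    qed
    ultimately show "(?F has_vector_derivative ((a + b) * ?E1 x - b * ?E0 x)) (at x)"
      by (auto dest: has_vector_derivative_real_field)
  qed simp
  ultimately have "(a + b) * beta_integral a (b + 1) - b * beta_integral a b = ?F 1 - ?F 0"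
    by (rule has_integral_unique)
  also have "?F 1 - ?F 0 = 0" using a b by simp
  finally show ?thesis by simp
qed

lemma beta_integral_pochhammer:
  assumes a: "Re a > 0" and b: "Re b > 0"
  shows "beta_integral a b * pochhammer b n = beta_integral a (b + of_nat n) * pochhammer (a + b) n"
proof (induction n)
  case 0
  then show ?case by simp
next
  case (Suc n)
  have bn: "Re (b + of_nat n) > 0" using b by simp
  have "beta_integral a b * pochhammer b (Suc n) = beta_integral a b * pochhammer b n * (b + of_nat n)"
    by (simp add: pochhammer_Suc)
  also have "\<dots> = pochhammer (a + b) n * ((b + of_nat n) * beta_integral a (b + of_nat n))"
    using Suc.IH by (simp add: algebra_simps)
  also have "(b + of_nat n) * beta_integral a (b + of_nat n)
           = (a + (b + of_nat n)) * beta_integral a (b + of_nat n + 1)"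
    using beta_integral_plus1_right[OF a bn] by simp
  also have "pochhammer (a + b) n * ((a + (b + of_nat n)) * beta_integral a (b + of_nat n + 1))
       = beta_integral a (b + of_nat (Suc n)) * pochhammer (a + b) (Suc n)"
    by (simp add: pochhammer_Suc algebra_simps)
  finally show ?case .
qed

text \<open>The integrand of \<open>B(a, b+n)\<close> after the substitution \<open>x = s/n\<close>, extended by zero to
  \<open>[0,\<infinity>)\<close>.  As \<open>n \<rightarrow> \<infinity>\<close> it tends to the Gamma integrand \<open>s^(a-1) e^(-s)\<close>.\<close>
definition gauss_integrand :: "complex \<Rightarrow> complex \<Rightarrow> nat \<Rightarrow> real \<Rightarrow> complex" where
  "gauss_integrand a b n s =
     (if s \<in> {0..real n}
      then complex_of_real s powr (a - 1) * (1 - complex_of_real s / of_nat n) powr (b + of_nat n - 1)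
      else 0)"

lemma beta_integral_rescaled:
  assumes a: "Re a > 0" and b: "Re b > 0" and n: "n > 0"
  shows "((\<lambda>s::real. complex_of_real s powr (a - 1) * (1 - complex_of_real s / of_nat n) powr (b + of_nat n - 1))
          has_integral (of_nat n powr a * beta_integral a (b + of_nat n))) {0..real n}"
proof -
  let ?f = "\<lambda>x::real. complex_of_real x powr (a - 1) * (1 - complex_of_real x) powr (b + of_nat n - 1)"
  have bn: "Re (b + of_nat n) > 0" using b by simp
  have "(?f has_integral beta_integral a (b + of_nat n)) (cbox 0 1)"
    using beta_integral_has_integral[OF a bn] by simp
  from has_integral_affinity'[OF this, of "1 / real n" 0] n
  have "((\<lambda>s. ?f (s / real n)) has_integral (real n *\<^sub>R beta_integral a (b + of_nat n))) {0..real n}"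
    by simp
  then have H: "((\<lambda>s. of_nat n powr (a - 1) * ?f (s / real n)) has_integral
        (of_nat n powr (a - 1) * (of_nat n * beta_integral a (b + of_nat n)))) {0..real n}"
    by (intro has_integral_mult_right) (simp add: scaleR_conv_of_real)
  have K: "of_nat n powr (a - 1) * (of_nat n * beta_integral a (b + of_nat n))
         = of_nat n powr a * beta_integral a (b + of_nat n)"
    by (subst powr_eq_mult_powr_minus_one[of "of_nat n" a]) (simp only: mult_ac)
  have P: "of_nat n powr (a - 1) * ?f (s / real n) =
      complex_of_real s powr (a - 1) * (1 - complex_of_real s / of_nat n) powr (b + of_nat n - 1)"
    if s: "s \<in> {0..real n}" for s
  proof -
    have "(complex_of_real (s / real n) * of_nat n) powr (a - 1)
        = complex_of_real (s / real n) powr (a - 1) * of_nat n powr (a - 1)"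
      using s by (intro powr_times_real) auto
    moreover have "complex_of_real (s / real n) * of_nat n = complex_of_real s" using n by simp
    ultimately have scale: "complex_of_real (s / real n) powr (a - 1) * of_nat n powr (a - 1)
        = complex_of_real s powr (a - 1)" by (simp only:)
    have shift: "1 - complex_of_real (s / real n) = 1 - complex_of_real s / of_nat n" by simp
    show ?thesis unfolding shift scale[symmetric] by (simp only: mult_ac)
  qed
  show ?thesis using has_integral_eq[OF P H] by (simp only: K)
qed

lemma gauss_integrand_has_integral:
  assumes a: "Re a > 0" and b: "Re b > 0"
  shows "(gauss_integrand a b n has_integral (of_nat n powr a * beta_integral a (b + of_nat n))) {0..}"
proof (cases "n = 0")
  case True
  then have "((\<lambda>s. complex_of_real s powr (a - 1) * (1 - complex_of_real s / of_nat n) powr (b + of_nat n - 1))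
      has_integral 0) {0..real n}" by (simp add: has_integral_refl)
  then show ?thesis using True unfolding gauss_integrand_def by (subst has_integral_restrict) auto
next
  case False
  then show ?thesis unfolding gauss_integrand_def using beta_integral_rescaled[OF a b, of n]
    by (subst has_integral_restrict) auto
qed

text \<open>Uniform domination, from \<open>(1 - s/n)^(n-1) \<le> e^(-s+s/n) \<le> e^(1-s)\<close> for \<open>s \<le> n\<close>.\<close>
lemma gauss_integrand_bound:
  assumes b: "Re b > 0" and s: "s \<ge> 0"
  shows "norm (gauss_integrand a b n s) \<le> exp 1 * (s powr (Re a - 1) / exp s)"
proof (cases "s \<in> {0..real n} \<and> s > 0")
  case False
  then have "gauss_integrand a b n s = 0" using s by (auto simp: gauss_integrand_def)
  then show ?thesis by simp
next
  case True
  then have n: "real n > 0" and s0: "s > 0" and sn: "s \<le> real n" by auto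
  define q where "q = 1 - s / real n"
  have q0: "q \<ge> 0" and q1: "q \<le> 1" using n sn s0 by (auto simp: q_def field_simps)
  have "norm ((1 - complex_of_real s / of_nat n) powr (b + of_nat n - 1)) = q powr (Re b + real n - 1)"
    using norm_of_real_powr[of q "b + of_nat n - 1"] q0 by (simp add: q_def)
  then have "norm (gauss_integrand a b n s) = s powr (Re a - 1) * q powr (Re b + real n - 1)"
    using True by (simp add: gauss_integrand_def norm_mult norm_of_real_powr)
  also have "q powr (Re b + real n - 1) \<le> q powr (real n - 1)"
    using q0 q1 b by (intro powr_mono') auto
  also have "q powr (real n - 1) \<le> exp (- s / real n) powr (real n - 1)"
  proof (cases "n = 1")
    case False
    then have "real n - 1 \<ge> 0" using n by auto
    moreover have "q \<le> exp (- s / real n)" unfolding q_def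
      using exp_ge_add_one_self[of "- s / real n"] by simp
    ultimately show ?thesis using q0 by (intro powr_mono2) auto
  qed simp
  also have "\<dots> = exp (- s + s / real n)"
    using n by (simp add: exp_powr_real field_simps)
  also have "\<dots> \<le> exp (1 - s)" using sn n by (simp add: field_simps)
  finally have "norm (gauss_integrand a b n s) \<le> s powr (Re a - 1) * exp (1 - s)"
    by (simp add: mult_left_mono)
  also have "\<dots> = exp 1 * (s powr (Re a - 1) / exp s)" by (simp add: exp_diff)
  finally show ?thesis .
qed

text \<open>Pointwise limit, from \<open>(1 - s/n)^n \<rightarrow> e^(-s)\<close>.\<close>
lemma gauss_integrand_limit:
  assumes s: "s \<ge> 0"
  shows "(\<lambda>n. gauss_integrand a b n s) \<longlonglongrightarrow> complex_of_real s powr (a - 1) / complex_of_real (exp s)"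
proof -
  let ?q = "\<lambda>n. 1 - complex_of_real s / of_nat n"
  have q_lim: "?q \<longlonglongrightarrow> 1"
    using tendsto_diff[OF tendsto_const[of 1] lim_const_over_n[of "complex_of_real s"]] by simp
  have q_pow_lim: "(\<lambda>n. ?q n powr (b - 1)) \<longlonglongrightarrow> 1 powr (b - 1)"
    by (intro tendsto_powr_complex' q_lim tendsto_const) auto
  have exp_lim: "(\<lambda>n. complex_of_real ((1 - s / real n) ^ n)) \<longlonglongrightarrow> complex_of_real (exp (- s))"
    using tendsto_exp_limit_sequentially[of "-s"] by (intro tendsto_of_real) simp
  have "(\<lambda>n. complex_of_real s powr (a - 1) * (?q n powr (b - 1) * complex_of_real ((1 - s / real n) ^ n)))
        \<longlonglongrightarrow> complex_of_real s powr (a - 1) * (1 powr (b - 1) * complex_of_real (exp (- s)))"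
    by (intro tendsto_intros q_pow_lim exp_lim)
  also have "complex_of_real s powr (a - 1) * (1 powr (b - 1) * complex_of_real (exp (- s)))
           = complex_of_real s powr (a - 1) / complex_of_real (exp s)"
    by (simp add: exp_minus field_simps)
  finally show ?thesis
  proof (rule Lim_transform_eventually)
    have "eventually (\<lambda>n. real n > s) sequentially"
      using eventually_gt_at_top[of "nat \<lceil>s\<rceil>"] by eventually_elim linarith
    then show "eventually (\<lambda>n. complex_of_real s powr (a - 1) *
          (?q n powr (b - 1) * complex_of_real ((1 - s / real n) ^ n)) = gauss_integrand a b n s) sequentially"
    proof eventually_elim
      case (elim n)
      then have nz: "?q n \<noteq> 0" using s by (auto simp: complex_eq_iff)
      have "?q n powr (b + of_nat n - 1) = ?q n powr (b - 1) * ?q n powr (of_nat n)"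
        by (simp add: powr_add[symmetric] algebra_simps)
      also have "?q n powr (of_nat n) = ?q n ^ n"
        by (rule powr_complexpow[OF nz])
      also have "\<dots> = complex_of_real ((1 - s / real n) ^ n)" by simp
      finally show ?case using elim s by (simp add: gauss_integrand_def)
    qed
  qed
qed

lemma beta_integral_gauss_limit:
  assumes a: "Re a > 0" and b: "Re b > 0"
  shows "(\<lambda>n. of_nat n powr a * beta_integral a (b + of_nat n)) \<longlonglongrightarrow> Gamma a"
proof -
  let ?g = "\<lambda>s::real. complex_of_real s powr (a - 1) / complex_of_real (exp s)"
  let ?h = "\<lambda>s::real. exp 1 * (s powr (Re a - 1) / exp s)"
  have "?h integrable_on {0..}"
    using Gamma_integral_real[of "Re a"] a
    by (intro integrable_on_mult_right) auto
  then have "(\<lambda>n. integral {0..} (gauss_integrand a b n)) \<longlonglongrightarrow> integral {0..} ?g"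
    using dominated_convergence(2)[of "gauss_integrand a b" "{0..}" ?h ?g]
      gauss_integrand_has_integral[OF a b] gauss_integrand_bound[OF b] gauss_integrand_limit
    by (auto simp: has_integral_integrable)
  moreover have "integral {0..} (gauss_integrand a b n) = of_nat n powr a * beta_integral a (b + of_nat n)" for n
    using gauss_integrand_has_integral[OF a b] by (rule integral_unique)
  moreover have "integral {0..} ?g = Gamma a"
    using Gamma_integral_complex[OF a] by (rule integral_unique)
  ultimately show ?thesis by simp
qed

lemma pochhammer_nonzero_Re_pos: "Re (z::complex) > 0 \<Longrightarrow> pochhammer z n \<noteq> 0"
  by (subst pochhammer_eq_0_iff) auto

text \<open>The companion limit \<open>(a+b)_n / ((b)_n n^a) \<rightarrow> \<Gamma>(b)/\<Gamma>(a+b)\<close>, read off from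
  Euler's product (\<open>Gamma_series\<close>) for \<open>\<Gamma>(b)\<close> and \<open>1/\<Gamma>(a+b)\<close>.\<close>
lemma pochhammer_ratio_limit:
  assumes a: "Re a > 0" and b: "Re b > 0"
  shows "(\<lambda>n. pochhammer (a + b) n / (pochhammer b n * of_nat n powr a)) \<longlonglongrightarrow> Gamma b * rGamma (a + b)"
proof -
  have "(\<lambda>n. Gamma_series b n * rGamma_series (a + b) n * ((b / of_nat n + 1) / ((a + b) / of_nat n + 1)))
        \<longlonglongrightarrow> Gamma b * rGamma (a + b) * ((0 + 1) / (0 + 1))"
    by (intro tendsto_intros) auto
  then have L: "(\<lambda>n. Gamma_series b n * rGamma_series (a + b) n * ((b / of_nat n + 1) / ((a + b) / of_nat n + 1)))
        \<longlonglongrightarrow> Gamma b * rGamma (a + b)" by simp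
  show ?thesis
  proof (rule Lim_transform_eventually[OF L])
    show "eventually (\<lambda>n. Gamma_series b n * rGamma_series (a + b) n * ((b / of_nat n + 1) / ((a + b) / of_nat n + 1))
       = pochhammer (a + b) n / (pochhammer b n * of_nat n powr a)) sequentially"
      using eventually_gt_at_top[of "0::nat"]
    proof eventually_elim
      case (elim n)
      have field_identity: "(f * F / (P * u)) * ((Q * v) / (f * (E * F))) * ((u / N) / (v / N)) = Q / (P * E)"
        if "P \<noteq> 0" "f \<noteq> 0" "E \<noteq> 0" "F \<noteq> 0" "N \<noteq> 0" "u \<noteq> 0" "v \<noteq> 0"
        for P Q f E F N u v :: complex
        using that by (simp add: field_simps)
      have ab: "Re (a + b) > 0" using a b by simp
      have nz: "pochhammer b n \<noteq> 0" "pochhammer b (n + 1) \<noteq> 0" "pochhammer (a + b) (n + 1) \<noteq> 0"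
        by (intro pochhammer_nonzero_Re_pos b ab)+
      have nz': "b + of_nat n \<noteq> 0" "a + b + of_nat n \<noteq> 0" "(of_nat n :: complex) \<noteq> 0" "(fact n :: complex) \<noteq> 0"
        using a b elim by (auto simp: complex_eq_iff)
      have pw: "of_nat n powr a = exp (a * of_real (ln (real n)))"
        using elim by (simp add: powr_def)
      have e: "exp ((a + b) * of_real (ln (real n))) = exp (a * of_real (ln (real n))) * exp (b * of_real (ln (real n)))"
        by (simp add: exp_add[symmetric] algebra_simps)
      have q: "(b / of_nat n + 1) = (b + of_nat n) / of_nat n" "((a + b) / of_nat n + 1) = (a + b + of_nat n) / of_nat n"
        using nz' by (simp_all add: field_simps)
      have ps: "pochhammer b (n + 1) = pochhammer b n * (b + of_nat n)"
               "pochhammer (a + b) (n + 1) = pochhammer (a + b) n * (a + b + of_nat n)"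
        by (simp_all add: pochhammer_Suc)
      show ?case
        unfolding Gamma_series_def rGamma_series_def pw e q ps
        by (rule field_identity) (use nz nz' in auto)
    qed
  qed
qed

text \<open>Euler's Beta integral: multiplying the two limits, the factor \<open>n^a\<close> cancels and
  the product is the constant sequence \<open>B(a,b)\<close> by the Pochhammer identity.\<close>
theorem beta_integral_eq_Beta:
  assumes a: "Re a > 0" and b: "Re b > 0"
  shows "beta_integral a b = Beta a b"
proof -
  have L: "(\<lambda>n. (of_nat n powr a * beta_integral a (b + of_nat n)) *
           (pochhammer (a + b) n / (pochhammer b n * of_nat n powr a))) \<longlonglongrightarrow> Gamma a * (Gamma b * rGamma (a + b))"
    by (intro tendsto_mult beta_integral_gauss_limit pochhammer_ratio_limit a b)
  have "eventually (\<lambda>n. (of_nat n powr a * beta_integral a (b + of_nat n)) *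
           (pochhammer (a + b) n / (pochhammer b n * of_nat n powr a)) = beta_integral a b) sequentially"
    using eventually_gt_at_top[of "0::nat"]
  proof eventually_elim
    case (elim n)
    have p: "pochhammer b n \<noteq> 0" using b by (rule pochhammer_nonzero_Re_pos)
    have pw: "(of_nat n :: complex) powr a \<noteq> 0" using elim by (simp add: powr_def)
    have "(of_nat n powr a * beta_integral a (b + of_nat n)) * (pochhammer (a + b) n / (pochhammer b n * of_nat n powr a))
        = beta_integral a (b + of_nat n) * pochhammer (a + b) n / pochhammer b n"
      using p pw by (simp add: field_simps)
    also have "\<dots> = beta_integral a b" using beta_integral_pochhammer[OF a b, of n] p by (simp add: field_simps)
    finally show ?case .
  qed
  with L have "(\<lambda>n. beta_integral a b) \<longlonglongrightarrow> Gamma a * (Gamma b * rGamma (a + b))"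
    by (rule Lim_transform_eventually)
  then have "beta_integral a b = Gamma a * (Gamma b * rGamma (a + b))" by (rule LIMSEQ_const_iff[THEN iffD1])
  then show ?thesis by (simp add: Beta_altdef mult_ac)
qed


section \<open>The one-dimensional identity\<close>

text \<open>The function \<open>\<Phi>(x) = x^t (1 - (1-x)^(t+1))\<close> is continuous on \<open>[0,1]\<close> when \<open>Re t > -1\<close>;
  at \<open>0\<close> this needs \<open>1 - (1-x)^(t+1) = O(x)\<close> to compensate a possibly unbounded \<open>x^t\<close>.\<close>
lemma antiderivative_continuous:
  assumes t: "Re t > -1"
  shows "continuous_on {0..1} (\<lambda>x::real. complex_of_real x powr t * (1 - (1 - complex_of_real x) powr (t + 1)))"
    (is "continuous_on _ ?\<Phi>")
proof (rule continuous_on_IccI)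
  have t1: "Re (t + 1) > 0" using t by simp
  have x_pow: "((\<lambda>x::real. complex_of_real x powr (t + 1)) \<longlongrightarrow> 0) (at_right 0)"
    by (rule tendsto_powr_complex_0) (auto intro!: tendsto_eq_intros t1)
  have "((\<lambda>z. (1 - z) powr (t + 1)) has_field_derivative (-(t + 1))) (at 0)"
    by (auto intro!: derivative_eq_intros)
  then have "((\<lambda>z. ((1 - z) powr (t + 1) - (1 - 0) powr (t + 1)) / (z - 0)) \<longlongrightarrow> -(t + 1)) (at 0)"
    unfolding has_field_derivative_iff .
  from filterlim_compose[OF this filterlim_of_real_at_right_0]
  have diff_quot: "((\<lambda>x::real. ((1 - complex_of_real x) powr (t + 1) - 1) / complex_of_real x) \<longlongrightarrow> -(t + 1)) (at_right 0)"
    by (simp add: o_def)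
  have "((\<lambda>x. - (complex_of_real x powr (t + 1) * (((1 - complex_of_real x) powr (t + 1) - 1) / complex_of_real x)))
        \<longlongrightarrow> - (0 * (-(t + 1)))) (at_right 0)"
    by (intro tendsto_intros x_pow diff_quot)
  moreover have "eventually (\<lambda>x. - (complex_of_real x powr (t + 1) * (((1 - complex_of_real x) powr (t + 1) - 1)
      / complex_of_real x)) = ?\<Phi> x) (at_right 0)"
    using eventually_at_right_less[of "0::real"]
  proof eventually_elim
    case (elim x)
    have "complex_of_real x powr (t + 1) = complex_of_real x * complex_of_real x powr t"
      using powr_eq_mult_powr_minus_one[of "complex_of_real x" "t + 1"] by simp
    then show ?case using elim by (simp add: field_simps)
  qed
  ultimately have "(?\<Phi> \<longlongrightarrow> 0) (at_right 0)" by (simp add: Lim_transform_eventually)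
  then show "(?\<Phi> \<longlongrightarrow> ?\<Phi> 0) (at_right 0)" by simp
next
  have t1: "Re (t + 1) > 0" using t by simp
  have x_pow: "((\<lambda>x::real. complex_of_real x powr t) \<longlongrightarrow> 1 powr t) (at_left 1)"
    by (rule tendsto_powr_complex) (auto intro!: tendsto_eq_intros)
  have one_minus_x_pow: "((\<lambda>x::real. (1 - complex_of_real x) powr (t + 1)) \<longlongrightarrow> 0) (at_left 1)"
    by (rule tendsto_powr_complex_0) (auto intro!: tendsto_eq_intros t1)
  have "(?\<Phi> \<longlongrightarrow> 1 powr t * (1 - 0)) (at_left 1)"
    by (intro tendsto_intros x_pow one_minus_x_pow)
  then show "(?\<Phi> \<longlongrightarrow> ?\<Phi> 1) (at_left 1)" using t1 by simp
next
  fix x :: real assume "0 < x" "x < 1"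
  then have "isCont ?\<Phi> x"
    by (auto intro!: continuous_intros simp: complex_nonpos_Reals_iff)
  then show "(?\<Phi> \<longlongrightarrow> ?\<Phi> x) (at x)" by (simp add: isCont_def)
qed simp

text \<open>Differentiating \<open>\<Phi>\<close> gives \<open>\<Phi>' = t\<cdot>x^(t-1)(1 - (1-x)^t) + (2t+1)\<cdot>x^t(1-x)^t\<close>, and
  \<open>\<Phi>(1) - \<Phi>(0) = 1\<close>; the second term integrates to \<open>(2t+1) B(t+1,t+1)\<close>, whence
  \<open>\<integral>_0^1 x^(t-1) (1 - (1-x)^t) dx = (1 - (2t+1) B(t+1,t+1)) / t\<close>.\<close>
lemma one_dimensional_identity:
  assumes t1: "Re t > -1" and t0: "t \<noteq> 0"
  shows "((\<lambda>x::real. complex_of_real x powr (t - 1) * (1 - (1 - complex_of_real x) powr t))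
           has_integral ((1 - (2 * t + 1) * Beta (t + 1) (t + 1)) / t)) {0..1}"
proof -
  define A where "A = (\<lambda>x::real. complex_of_real x powr (t - 1) * (1 - (1 - complex_of_real x) powr t))"
  define B where "B = (\<lambda>x::real. complex_of_real x powr t * (1 - complex_of_real x) powr t)"
  define \<Phi> where "\<Phi> = (\<lambda>x::real. complex_of_real x powr t * (1 - (1 - complex_of_real x) powr (t + 1)))"
  have t1': "Re (t + 1) > 0" using t1 by simp
  have B_int: "(B has_integral Beta (t + 1) (t + 1)) {0..1}"
    using beta_integral_has_integral[OF t1' t1'] beta_integral_eq_Beta[OF t1' t1'] by (simp add: B_def)
  have "((\<lambda>x. t * A x + (2 * t + 1) * B x) has_integral (\<Phi> 1 - \<Phi> 0)) {0..1}"
  proof (rule fundamental_theorem_of_calculus_interior)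
    show "continuous_on {0..1} \<Phi>" unfolding \<Phi>_def by (rule antiderivative_continuous[OF t1])
    fix x :: real assume x: "x \<in> {0<..<1}"
    have nz: "complex_of_real x \<notin> \<real>\<^sub>\<le>\<^sub>0" "1 - complex_of_real x \<notin> \<real>\<^sub>\<le>\<^sub>0"
      using x by (auto simp: complex_nonpos_Reals_iff)
    have "((\<lambda>z. z powr t * (1 - (1 - z) powr (t + 1))) has_field_derivative
          (t * complex_of_real x powr (t - 1) * (1 - (1 - complex_of_real x) powr (t + 1))
           + complex_of_real x powr t * ((t + 1) * (1 - complex_of_real x) powr t))) (at (complex_of_real x))"
      using nz by (auto intro!: derivative_eq_intros simp: algebra_simps)
    moreover have "t * complex_of_real x powr (t - 1) * (1 - (1 - complex_of_real x) powr (t + 1))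
           + complex_of_real x powr t * ((t + 1) * (1 - complex_of_real x) powr t)
         = t * A x + (2 * t + 1) * B x"
    proof -
      have e1: "(1 - complex_of_real x) powr (t + 1) = (1 - complex_of_real x) * (1 - complex_of_real x) powr t"
        using powr_eq_mult_powr_minus_one[of "1 - complex_of_real x" "t + 1"] by simp
      have e2: "complex_of_real x powr t = complex_of_real x * complex_of_real x powr (t - 1)"
        by (rule powr_eq_mult_powr_minus_one)
      show ?thesis unfolding A_def B_def e1 e2 by (simp add: algebra_simps)
    qed
    ultimately show "(\<Phi> has_vector_derivative (t * A x + (2 * t + 1) * B x)) (at x)"
      unfolding \<Phi>_def by (auto dest: has_vector_derivative_real_field)
  qed simp
  moreover have "\<Phi> 1 - \<Phi> 0 = 1" using t1' by (simp add: \<Phi>_def)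
  ultimately have "((\<lambda>x. t * A x + (2 * t + 1) * B x) has_integral 1) {0..1}" by simp
  from has_integral_mult_right[OF has_integral_diff[OF this has_integral_mult_right[OF B_int]], of "1 / t" "2 * t + 1"]
  have "((\<lambda>x. (1 / t) * ((t * A x + (2 * t + 1) * B x) - (2 * t + 1) * B x)) has_integral
        (1 / t) * (1 - (2 * t + 1) * Beta (t + 1) (t + 1))) {0..1}" .
  moreover have "(1 / t) * ((t * A x + (2 * t + 1) * B x) - (2 * t + 1) * B x) = A x" for x
    using t0 by (simp add: field_simps)
  ultimately show ?thesis unfolding A_def[symmetric] by simp
qed

section \<open>Integrability on the triangle\<close>

text \<open>Lebesgue measure on the plane, as a product measure (the form in which Fubini applies).\<close>
abbreviation lborel2 :: "(real \<times> real) measure" where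
  "lborel2 \<equiv> lborel \<Otimes>\<^sub>M lborel"

lemma Tri_closed: "closed Tri"
proof -
  have "Tri = {p::real \<times> real. 0 \<le> fst p \<and> fst p \<le> 1 \<and> 0 \<le> snd p \<and> snd p \<le> 1 \<and> fst p + snd p \<ge> 1}"
    by (auto simp: Tri_def)
  also have "closed \<dots>"
    by (intro closed_Collect_conj closed_Collect_le continuous_intros)
  finally show ?thesis .
qed

lemma Tri_measurable [measurable]: "Tri \<in> sets lborel2"
  unfolding lborel_prod using Tri_closed by (simp add: borel_closed)

text \<open>Almost every point of \<open>T\<close> lies in the open unit square, where \<open>ln (xy)\<close> is finite.\<close>
lemma AE_Tri_interior:
  "AE p in lborel2. p \<in> Tri \<longrightarrow> 0 < fst p \<and> fst p < 1 \<and> 0 < snd p \<and> snd p < 1"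
proof -
  have "{1::real} \<times> (UNIV :: real set) \<in> null_sets lborel2"
    by (intro lborel.times_in_null_sets1) auto
  moreover have "(UNIV :: real set) \<times> {1::real} \<in> null_sets lborel2"
    by (intro lborel.times_in_null_sets2) auto
  ultimately have "({1::real} \<times> UNIV) \<union> (UNIV \<times> {1::real}) \<in> null_sets lborel2"
    by (rule null_sets.Un)
  then have "AE p in lborel2. fst p \<noteq> 1 \<and> snd p \<noteq> 1"
    by (rule AE_I') auto
  then show ?thesis by eventually_elim (auto simp: Tri_def)
qed

text \<open>On \<open>T\<close> the singular weight \<open>(xy)^(-2a)\<close> is bounded by a product of two Beta
  densities: one of \<open>x, y\<close> is at least \<open>1/2\<close>, and the other one is at least the
  distance of the first one to \<open>1\<close>.\<close>
lemma triangle_power_bound: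
  fixes x y a :: real
  assumes "0 < x" "x < 1" "0 < y" "y < 1" "x + y \<ge> 1" "0 < a" "a < 1"
  shows "(x * y) powr (-2 * a) \<le> 2 powr (2 * a) * ((x powr -a * (1 - x) powr -a) * (y powr -a * (1 - y) powr -a))"
proof -
  have half_case: "(u * v) powr (-2 * a) \<le> 2 powr (2 * a) * ((u powr -a * (1 - u) powr -a) * (v powr -a * (1 - v) powr -a))"
    if uv: "0 < u" "u < 1" "0 < v" "v < 1" "u + v \<ge> 1" "v \<ge> 1/2" for u v :: real
  proof -
    define X where "X = u powr -a"
    define W where "W = (1 - v) powr -a"
    define V where "V = (1 - u) powr -a * (v powr -a * W)"
    have X0: "X \<ge> 0" and W0: "W \<ge> 0" by (simp_all add: X_def W_def)
    have split: "(u * v) powr (-2 * a) = X * X * v powr (-2 * a)"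
      using uv by (simp add: X_def powr_mult powr_add[symmetric])
    have v_pow: "v powr (-2 * a) \<le> 2 powr (2 * a)"
    proof -
      have "v powr (-2 * a) \<le> (1/2) powr (-2 * a)"
        using uv assms by (intro powr_mono2') auto
      also have "(1/2::real) powr (-2 * a) = 2 powr (2 * a)"
        by (simp add: powr_minus_divide powr_divide)
      finally show ?thesis .
    qed
    have "X \<le> W"
      unfolding X_def W_def using uv assms by (intro powr_mono2') auto
    moreover have "W \<le> V"
    proof -
      have "1 \<le> (1 - u) powr -a" using powr_mono2'[of "-a" "1 - u" 1] uv assms by simp
      moreover have "1 \<le> v powr -a" using powr_mono2'[of "-a" v 1] uv assms by simp
      ultimately have "1 \<le> (1 - u) powr -a * v powr -a"
        using mult_mono[of 1 "(1 - u) powr -a" 1 "v powr -a"] by simp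
      from mult_right_mono[OF this W0] show ?thesis by (simp add: V_def mult_ac)
    qed
    ultimately have "X * X * v powr (-2 * a) \<le> X * V * 2 powr (2 * a)"
      using X0 W0 v_pow by (intro mult_mono) auto
    then show ?thesis unfolding split V_def W_def X_def by (simp add: mult_ac)
  qed
  show ?thesis
  proof (cases "y \<ge> 1/2")
    case True
    then show ?thesis using half_case assms by blast
  next
    case False
    then have "x \<ge> 1/2" using assms by auto
    with half_case[of y x] assms show ?thesis by (simp add: mult_ac)
  qed
qed

definition beta_density :: "real \<Rightarrow> real \<Rightarrow> real" where
  "beta_density a x = indicator {0..1} x * (x powr -a * (1 - x) powr -a)"

lemma beta_density_integrable:
  assumes "0 < a" "a < 1"
  shows "integrable lborel (beta_density a)"
proof -
  have "set_integrable lborel {0..1} (\<lambda>x. x powr (1 - a - 1) * (1 - x) powr (1 - a - 1))"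
    using assms by (intro integrable_Beta) auto
  then show ?thesis unfolding set_integrable_def beta_density_def by simp
qed

lemma integrable_tensor_product:
  fixes f g :: "real \<Rightarrow> real"
  assumes f: "integrable lborel f" and g: "integrable lborel g"
  shows "integrable lborel2 (\<lambda>p. f (fst p) * g (snd p))"
proof (rule lborel_pair.Fubini_integrable)
  have [measurable]: "f \<in> borel_measurable lborel" "g \<in> borel_measurable lborel"
    using f g by auto
  show "(\<lambda>p. f (fst p) * g (snd p)) \<in> borel_measurable lborel2" by measurable
  have "integrable lborel (\<lambda>x. norm (f x) * (\<integral>y. norm (g y) \<partial>lborel))"
    using f by (intro integrable_mult_left integrable_norm)
  then show "integrable lborel (\<lambda>x. \<integral>y. norm (f (fst (x, y)) * g (snd (x, y))) \<partial>lborel)"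
    by (simp add: norm_mult abs_mult)
  show "AE x in lborel. integrable lborel (\<lambda>y. f (fst (x, y)) * g (snd (x, y)))"
    using g by auto
qed

text \<open>The kernel \<open>(xy)^(t-1)\<close> on \<open>T\<close> and its real majorant \<open>(xy)^(-r-1)\<close>, written with
  \<open>exp\<close> and \<open>ln\<close> so that no case distinction at \<open>xy = 0\<close> is needed.\<close>
definition tri_kernel :: "complex \<Rightarrow> real \<times> real \<Rightarrow> complex" where
  "tri_kernel t p = indicator Tri p * exp ((t - 1) * complex_of_real (ln (fst p * snd p)))"

definition tri_majorant :: "real \<Rightarrow> real \<times> real \<Rightarrow> real" where
  "tri_majorant r p = indicator Tri p * exp ((- r - 1) * ln (fst p * snd p))"

lemma tri_kernel_measurable [measurable]: "tri_kernel t \<in> borel_measurable lborel2"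
  unfolding tri_kernel_def by measurable

lemma tri_majorant_measurable [measurable]: "tri_majorant r \<in> borel_measurable lborel2"
  unfolding tri_majorant_def by measurable

text \<open>The majorant is integrable for \<open>0 < r < 1\<close>: take \<open>a = (r+1)/2\<close> in the triangle bound.\<close>
lemma tri_majorant_integrable:
  assumes r: "0 < r" "r < 1"
  shows "integrable lborel2 (tri_majorant r)"
proof (rule Bochner_Integration.integrable_bound)
  define a where "a = (r + 1) / 2"
  have a: "0 < a" "a < 1" using r by (auto simp: a_def)
  show "integrable lborel2 (\<lambda>p. 2 powr (2 * a) * (beta_density a (fst p) * beta_density a (snd p)))"
    by (intro integrable_mult_right integrable_tensor_product beta_density_integrable a)
  show "tri_majorant r \<in> borel_measurable lborel2" by measurable
  show "AE p in lborel2. norm (tri_majorant r p)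
          \<le> norm (2 powr (2 * a) * (beta_density a (fst p) * beta_density a (snd p)))"
    using AE_Tri_interior
  proof eventually_elim
    case (elim p)
    show ?case
    proof (cases "p \<in> Tri")
      case False
      then show ?thesis by (simp add: tri_majorant_def)
    next
      case True
      with elim have p: "0 < fst p" "fst p < 1" "0 < snd p" "snd p < 1" by auto
      have s: "fst p + snd p \<ge> 1" using True by (auto simp: Tri_def)
      have "norm (tri_majorant r p) = (fst p * snd p) powr (-2 * a)"
        using True p by (simp add: tri_majorant_def powr_def a_def algebra_simps)
      also have "\<dots> \<le> 2 powr (2 * a) * ((fst p powr -a * (1 - fst p) powr -a) * (snd p powr -a * (1 - snd p) powr -a))"
        by (rule triangle_power_bound[OF p s a])
      also have "\<dots> = norm (2 powr (2 * a) * (beta_density a (fst p) * beta_density a (snd p)))"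
        using p by (simp add: beta_density_def abs_mult)
      finally show ?thesis .
    qed
  qed
qed

text \<open>Since \<open>ln (xy) \<le> 0\<close> on \<open>T\<close>, the kernel is dominated by the majorant for \<open>|t| \<le> r\<close>.\<close>
lemma norm_tri_kernel_le:
  assumes "norm t \<le> r"
  shows "norm (tri_kernel t p) \<le> tri_majorant r p"
proof (cases "p \<in> Tri")
  case False
  then show ?thesis by (simp add: tri_kernel_def tri_majorant_def)
next
  case True
  define L where "L = ln (fst p * snd p)"
  have "fst p * snd p \<le> 1" "fst p * snd p \<ge> 0" using True by (auto simp: Tri_def intro: mult_le_one)
  then have L0: "L \<le> 0" unfolding L_def by (cases "fst p * snd p > 0") auto
  have "Re t \<ge> - r" using assms abs_Re_le_cmod[of t] by linarith
  then have "(Re t - 1) * L \<le> (- r - 1) * L"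
    using L0 by (intro mult_right_mono_neg) auto
  then show ?thesis using True
    by (simp add: tri_kernel_def tri_majorant_def norm_mult L_def[symmetric])
qed

lemma tri_kernel_integrable:
  assumes "0 < norm t" "norm t < 1"
  shows "integrable lborel2 (tri_kernel t)"
proof (rule Bochner_Integration.integrable_bound)
  show "integrable lborel2 (tri_majorant (norm t))" using tri_majorant_integrable assms by auto
  show "AE p in lborel2. norm (tri_kernel t p) \<le> norm (tri_majorant (norm t) p)"
    using norm_tri_kernel_le[of t "norm t"] by (auto intro!: order_trans[OF _ abs_ge_self])
qed measurable

section \<open>Term-by-term integration of the series\<close>

definition log_moment :: "nat \<Rightarrow> real \<times> real \<Rightarrow> real" where
  "log_moment n p = (- ln (fst p * snd p)) ^ n / (fst p * snd p)"

lemma log_moment_measurable [measurable]: "log_moment n \<in> borel_measurable lborel2"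
  unfolding log_moment_def by measurable

lemma Icoef_eq_integral: "Icoef n = integral\<^sup>L lborel2 (\<lambda>p. indicator Tri p * log_moment n p)"
  unfolding Icoef_def set_lebesgue_integral_def log_moment_def
  by (subst lborel_prod[symmetric]) simp

lemma exp_partial_sum_le:
  fixes x :: real
  assumes "0 \<le> x" and "finite N"
  shows "(\<Sum>k\<in>N. x ^ k / fact k) \<le> exp x"
proof -
  have s: "(\<lambda>k. x ^ k /\<^sub>R fact k) sums exp x" by (rule exp_converges)
  have "(\<Sum>k\<in>N. x ^ k /\<^sub>R fact k) \<le> suminf (\<lambda>k. x ^ k /\<^sub>R fact k)"
    by (rule sum_le_suminf) (use s assms in \<open>auto simp: sums_iff\<close>)
  also have "\<dots> = exp x" using s by (simp add: sums_iff)
  finally show ?thesis by (simp add: divide_inverse mult.commute)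
qed

lemma tri_majorant_eq:
  assumes "p \<in> Tri" "0 < fst p * snd p"
  shows "tri_majorant r p = exp (r * (- ln (fst p * snd p))) / (fst p * snd p)"
proof -
  define u where "u = fst p * snd p"
  have u: "u > 0" using assms by (simp add: u_def)
  have "exp ((- r - 1) * ln u) = exp (r * (- ln u)) * exp (- ln u)"
    by (simp add: exp_add[symmetric] algebra_simps)
  also have "exp (- ln u) = 1 / u"
    using u by (simp add: exp_minus inverse_eq_divide)
  finally show ?thesis using assms by (simp add: tri_majorant_def u_def[symmetric])
qed

text \<open>Each \<open>I_n\<close> is finite: \<open>(-ln u)^n \<le> n! r^(-n) exp (r (-ln u))\<close> for any \<open>0 < r < 1\<close>.\<close>
lemma log_moment_integrable:
  fixes r :: real
  assumes r: "0 < r" "r < 1"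
  shows "integrable lborel2 (\<lambda>p. indicator Tri p * log_moment n p)"
proof (rule Bochner_Integration.integrable_bound)
  show "integrable lborel2 (\<lambda>p. (fact n / r ^ n) * tri_majorant r p)"
    by (intro integrable_mult_right tri_majorant_integrable r)
  show "AE p in lborel2. norm (indicator Tri p * log_moment n p) \<le> norm ((fact n / r ^ n) * tri_majorant r p)"
    using AE_Tri_interior
  proof eventually_elim
    case (elim p)
    show ?case
    proof (cases "p \<in> Tri")
      case False
      then show ?thesis by (simp add: tri_majorant_def)
    next
      case True
      with elim have p: "0 < fst p" "fst p < 1" "0 < snd p" "snd p < 1" by auto
      define u where "u = fst p * snd p"
      have u: "0 < u" "u \<le> 1" using p by (auto simp: u_def intro: mult_le_one)
      define y where "y = - ln u"
      have y: "0 \<le> y" using u by (simp add: y_def)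
      have "(r * y) ^ n / fact n \<le> exp (r * y)"
        using exp_partial_sum_le[of "r * y" "{n}"] y r by simp
      then have "y ^ n / u \<le> fact n / r ^ n * exp (r * y) / u"
        using r u by (intro divide_right_mono) (simp_all add: field_simps)
      moreover have "tri_majorant r p = exp (r * y) / u"
        using tri_majorant_eq[OF True] u by (simp add: u_def y_def)
      moreover have "log_moment n p = y ^ n / u" by (simp add: log_moment_def y_def u_def)
      moreover have "0 \<le> y ^ n / u" using y u by auto
      ultimately show ?thesis using True r u y by (simp add: abs_mult)
    qed
  qed
qed measurable

definition kernel_term :: "complex \<Rightarrow> nat \<Rightarrow> real \<times> real \<Rightarrow> complex" where
  "kernel_term t n p = complex_of_real (indicator Tri p * log_moment n p) * ((-1) ^ n * t ^ n / fact n)"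

lemma kernel_term_measurable [measurable]: "kernel_term t n \<in> borel_measurable lborel2"
  unfolding kernel_term_def by measurable

lemma kernel_term_integral:
  assumes "0 < norm t" "norm t < 1"
  shows "integrable lborel2 (kernel_term t n)"
    and "integral\<^sup>L lborel2 (kernel_term t n) = (-1) ^ n * complex_of_real (Icoef n / fact n) * t ^ n"
proof -
  show "integrable lborel2 (kernel_term t n)"
    unfolding kernel_term_def using log_moment_integrable[of "norm t" n] assms
    by (intro integrable_mult_left integrable_of_real) auto
  have "integral\<^sup>L lborel2 (kernel_term t n) = complex_of_real (Icoef n) * ((-1) ^ n * t ^ n / fact n)"
    unfolding kernel_term_def Icoef_eq_integral by (simp only: integral_mult_left_zero integral_complex_of_real)
  then show "integral\<^sup>L lborel2 (kernel_term t n) = (-1) ^ n * complex_of_real (Icoef n / fact n) * t ^ n"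
    by (simp add: field_simps)
qed

text \<open>Pointwise on the interior of \<open>T\<close>: the terms are those of
  \<open>exp (t ln u) / u = u^(t-1)\<close>, and the partial sums are bounded by \<open>exp (|t| (-ln u)) / u\<close>.\<close>
lemma kernel_term_eq:
  assumes "p \<in> Tri" and u: "u = fst p * snd p" "0 < u"
  shows "kernel_term t n p = (t * complex_of_real (ln u)) ^ n /\<^sub>R fact n / complex_of_real u"
proof -
  have "complex_of_real ((- ln u) ^ n) * (-1) ^ n = complex_of_real (ln u) ^ n"
    by (simp add: power_mult_distrib[symmetric])
  then show ?thesis using assms
    by (simp add: kernel_term_def log_moment_def scaleR_conv_of_real field_simps)
qed

lemma kernel_terms_sums:
  assumes "p \<in> Tri" "0 < fst p * snd p"
  shows "(\<lambda>n. kernel_term t n p) sums tri_kernel t p"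
proof -
  define u where "u = fst p * snd p"
  have u: "0 < u" using assms by (simp add: u_def)
  have "(\<lambda>n. (t * complex_of_real (ln u)) ^ n /\<^sub>R fact n / complex_of_real u)
        sums (exp (t * complex_of_real (ln u)) / complex_of_real u)"
    by (intro sums_divide exp_converges)
  moreover have "exp (t * complex_of_real (ln u)) / complex_of_real u = tri_kernel t p"
  proof -
    have "complex_of_real u = exp (complex_of_real (ln u))" using u by (simp add: exp_of_real)
    then show ?thesis using assms
      by (simp add: tri_kernel_def u_def[symmetric] exp_diff[symmetric] algebra_simps)
  qed
  ultimately show ?thesis using kernel_term_eq[OF assms(1) u_def u] by simp
qed

lemma kernel_partial_sums_bound:
  assumes "p \<in> Tri" "0 < fst p * snd p" "fst p * snd p \<le> 1"
  shows "norm (\<Sum>n<N. kernel_term t n p) \<le> tri_majorant (norm t) p"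
proof -
  define u where "u = fst p * snd p"
  have u: "0 < u" "u \<le> 1" using assms by (auto simp: u_def)
  define y where "y = - ln u"
  have y: "0 \<le> y" using u by (simp add: y_def)
  have "norm (\<Sum>n<N. kernel_term t n p) \<le> (\<Sum>n<N. norm (kernel_term t n p))" by (rule norm_sum)
  also have "\<dots> = (\<Sum>n<N. (norm t * y) ^ n / fact n) / u"
    unfolding sum_divide_distrib
  proof (rule sum.cong)
    fix n
    have "norm (complex_of_real (ln u)) = y" using u by (simp add: y_def)
    then show "norm (kernel_term t n p) = (norm t * y) ^ n / fact n / u"
      unfolding kernel_term_eq[OF assms(1) u_def u(1)] using u
      by (simp add: norm_divide norm_mult norm_power field_simps)
  qed simp
  also have "\<dots> \<le> exp (norm t * y) / u"
    using u y by (intro divide_right_mono exp_partial_sum_le) auto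
  also have "\<dots> = tri_majorant (norm t) p" using tri_majorant_eq[OF assms(1,2)] by (simp add: u_def y_def)
  finally show ?thesis .
qed

lemma Icoef_series_sums:
  assumes t: "0 < norm t" "norm t < 1"
  shows "(\<lambda>n. (-1) ^ n * complex_of_real (Icoef n / fact n) * t ^ n) sums integral\<^sup>L lborel2 (tri_kernel t)"
proof -
  have "(\<lambda>N. integral\<^sup>L lborel2 (\<lambda>p. \<Sum>n<N. kernel_term t n p)) \<longlonglongrightarrow> integral\<^sup>L lborel2 (tri_kernel t)"
  proof (rule integral_dominated_convergence[where w = "tri_majorant (norm t)"])
    show "integrable lborel2 (tri_majorant (norm t))" using tri_majorant_integrable t by auto
    show "AE p in lborel2. (\<lambda>N. \<Sum>n<N. kernel_term t n p) \<longlonglongrightarrow> tri_kernel t p"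
      using AE_Tri_interior
    proof eventually_elim
      case (elim p)
      then show ?case
        using kernel_terms_sums[of p t]
        by (cases "p \<in> Tri") (auto simp: sums_def kernel_term_def tri_kernel_def)
    qed
    show "AE p in lborel2. norm (\<Sum>n<N. kernel_term t n p) \<le> tri_majorant (norm t) p" for N
      using AE_Tri_interior
    proof eventually_elim
      case (elim p)
      show ?case
      proof (cases "p \<in> Tri")
        case True
        with elim have "0 < fst p * snd p" "fst p * snd p \<le> 1" by (auto intro: mult_le_one)
        with True show ?thesis by (rule kernel_partial_sums_bound)
      qed (simp add: kernel_term_def tri_majorant_def)
    qed
  qed measurable
  moreover have "integral\<^sup>L lborel2 (\<lambda>p. \<Sum>n<N. kernel_term t n p)
      = (\<Sum>n<N. (-1) ^ n * complex_of_real (Icoef n / fact n) * t ^ n)" for N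
    using kernel_term_integral[OF t] by (simp add: Bochner_Integration.integral_sum)
  ultimately show ?thesis unfolding sums_def by simp
qed

section \<open>Evaluation of the triangle integral by Fubini\<close>

lemma tri_kernel_inner_integral:
  assumes x: "0 < x" "x < 1" and t0: "t \<noteq> 0"
  shows "(\<integral>y. tri_kernel t (x, y) \<partial>lborel) =
     complex_of_real x powr (t - 1) * (1 - (1 - complex_of_real x) powr t) / t"
proof -
  define c where "c = complex_of_real x powr (t - 1)"
  have kernel_eq: "tri_kernel t (x, y) = c * (indicator {1 - x..1} y *\<^sub>R complex_of_real y powr (t - 1))" for y
  proof (cases "y \<in> {1 - x..1}")
    case True
    then have "(x, y) \<in> Tri" "y > 0" using x by (auto simp: Tri_def)
    moreover have "exp ((t - 1) * complex_of_real (ln (x * y))) = c * complex_of_real y powr (t - 1)"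
      if "y > 0" using x that by (simp add: c_def of_real_powr_eq_exp ln_mult exp_add[symmetric] algebra_simps)
    ultimately show ?thesis using True by (simp add: tri_kernel_def)
  next
    case False
    then have "(x, y) \<notin> Tri" using x by (auto simp: Tri_def)
    then show ?thesis using False by (simp add: tri_kernel_def)
  qed
  have "continuous_on {1 - x..1} (\<lambda>y. complex_of_real y powr (t - 1))"
    using x by (intro continuous_intros) (auto simp: complex_nonpos_Reals_iff)
  then have integrable: "set_integrable lborel {1 - x..1} (\<lambda>y. complex_of_real y powr (t - 1))"
    by (rule borel_integrable_atLeastAtMost')
  have antiderivative: "((\<lambda>y. complex_of_real y powr (t - 1)) has_integral
      (complex_of_real 1 powr t / t - complex_of_real (1 - x) powr t / t)) {1 - x..1}"
  proof (rule fundamental_theorem_of_calculus)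
    fix y assume "y \<in> {1 - x..1}"
    then have "y > 0" using x by auto
    then have "((\<lambda>z. z powr t / t) has_field_derivative complex_of_real y powr (t - 1)) (at (complex_of_real y))"
      using t0 by (auto intro!: derivative_eq_intros simp: complex_nonpos_Reals_iff)
    then show "((\<lambda>y. complex_of_real y powr t / t) has_vector_derivative complex_of_real y powr (t - 1))
       (at y within {1 - x..1})"
      by (auto dest: has_vector_derivative_real_field intro: has_vector_derivative_at_within)
  qed (use x in simp)
  have "(\<integral>y. tri_kernel t (x, y) \<partial>lborel)
      = c * (LINT y:{1 - x..1}|lborel. complex_of_real y powr (t - 1))"
    unfolding kernel_eq set_lebesgue_integral_def by (rule integral_mult_right_zero)
  also have "(LINT y:{1 - x..1}|lborel. complex_of_real y powr (t - 1))
      = integral {1 - x..1} (\<lambda>y. complex_of_real y powr (t - 1))"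
    by (rule set_borel_integral_eq_integral(2)[OF integrable])
  also have "\<dots> = (1 - (1 - complex_of_real x) powr t) / t"
    using integral_unique[OF antiderivative] by (simp add: diff_divide_distrib)
  finally show ?thesis by (simp add: c_def)
qed

text \<open>Integrating in \<open>y\<close> first reduces \<open>\<integral>_T (xy)^(t-1)\<close> to the one-dimensional identity.\<close>
lemma tri_kernel_integral:
  assumes t: "0 < norm t" "norm t < 1"
  shows "integral\<^sup>L lborel2 (tri_kernel t) = (1 - (2 * t + 1) * Beta (t + 1) (t + 1)) / t\<^sup>2"
proof -
  have t0: "t \<noteq> 0" using t by auto
  have t1: "Re t > -1" using t abs_Re_le_cmod[of t] by linarith
  define A where "A = (\<lambda>x::real. complex_of_real x powr (t - 1) * (1 - (1 - complex_of_real x) powr t) / t)"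
  define h where "h = (\<lambda>x. \<integral>y. tri_kernel t (x, y) \<partial>lborel)"
  define g where "g = (\<lambda>x::real. indicator {0<..<1} x *\<^sub>R A x)"
  have K: "integrable lborel2 (tri_kernel t)" by (rule tri_kernel_integrable[OF t])
  have h: "integrable lborel h" unfolding h_def by (rule lborel_pair.integrable_fst'[OF K])
  have fubini: "integral\<^sup>L lborel2 (tri_kernel t) = integral\<^sup>L lborel h"
    using lborel_pair.integral_fst'[OF K] by (simp add: h_def)
  have "continuous_on {0<..<1} A"
    unfolding A_def using t0 by (intro continuous_intros) (auto simp: complex_nonpos_Reals_iff)
  then have g_meas: "g \<in> borel_measurable lborel"
    unfolding g_def using borel_measurable_continuous_on_indicator[of "{0<..<1}" A] by simp
  have "AE x in lborel. h x = g x"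
    using AE_lborel_singleton[of "0::real"] AE_lborel_singleton[of "1::real"]
  proof eventually_elim
    case (elim x)
    show ?case
    proof (cases "0 < x \<and> x < 1")
      case True
      then show ?thesis using tri_kernel_inner_integral[of x t] t0 by (simp add: h_def g_def A_def)
    next
      case False
      then have "x < 0 \<or> x > 1" using elim by auto
      then have "\<And>y. (x, y) \<notin> Tri" by (auto simp: Tri_def)
      then show ?thesis using False by (simp add: h_def g_def tri_kernel_def)
    qed
  qed
  with h g_meas have h_eq_g: "integral\<^sup>L lborel h = integral\<^sup>L lborel g" and "integrable lborel g"
    by (auto intro: integral_cong_AE integrable_cong_AE_imp)
  then have "set_integrable lborel {0<..<1} A"
    by (simp add: set_integrable_def g_def)
  then have "integral\<^sup>L lborel g = integral {0<..<1} A"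
    unfolding g_def using set_borel_integral_eq_integral(2) unfolding set_lebesgue_integral_def by blast
  also have "(A has_integral ((1 - (2 * t + 1) * Beta (t + 1) (t + 1)) / t / t)) {0<..<1}"
    unfolding A_def using one_dimensional_identity[OF t1 t0]
    by (intro has_integral_divide) (simp add: has_integral_Icc_iff_Ioo)
  then have "integral {0<..<1} A = (1 - (2 * t + 1) * Beta (t + 1) (t + 1)) / t / t"
    by (rule integral_unique)
  finally show ?thesis using fubini h_eq_g by (simp add: power2_eq_square)
qed

text \<open>\<open>(2t+1) B(t+1,t+1) = \<Gamma>(t+1)^2/\<Gamma>(2t+1) = 1/binom(2t,t)\<close>.\<close>
lemma Beta_eq_inverse_central_gbinom: "(2 * t + 1) * Beta (t + 1) (t + 1) = 1 / gbinom (2 * t) t"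
proof -
  have e1: "t + 1 + (t + 1) = (2 * t + 1) + 1" by simp
  have e2: "2 * t - t + 1 = t + 1" by simp
  have "(2 * t + 1) * Beta (t + 1) (t + 1) = Gamma (t + 1) * Gamma (t + 1) * ((2 * t + 1) * rGamma ((2 * t + 1) + 1))"
    unfolding Beta_altdef e1 by (simp only: mult_ac)
  also have "(2 * t + 1) * rGamma ((2 * t + 1) + 1) = rGamma (2 * t + 1)"
    by (rule rGamma_plus1)
  also have "Gamma (t + 1) * Gamma (t + 1) * rGamma (2 * t + 1) = 1 / gbinom (2 * t) t"
    unfolding gbinom_def e2 rGamma_inverse_Gamma by (simp add: divide_inverse)
  finally show ?thesis .
qed

theorem theorem5:
  fixes t :: complex
  assumes "0 < norm t" and "norm t < 1"
  shows "(\<lambda>n. (-1) ^ n * complex_of_real (Icoef n / fact n) * t ^ n)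
           sums ((1 / t\<^sup>2) * (1 - 1 / gbinom (2 * t) t))"
proof -
  have "(\<lambda>n. (-1) ^ n * complex_of_real (Icoef n / fact n) * t ^ n) sums integral\<^sup>L lborel2 (tri_kernel t)"
    by (rule Icoef_series_sums[OF assms])
  also have "integral\<^sup>L lborel2 (tri_kernel t) = (1 - (2 * t + 1) * Beta (t + 1) (t + 1)) / t\<^sup>2"
    by (rule tri_kernel_integral[OF assms])
  also have "\<dots> = (1 / t\<^sup>2) * (1 - 1 / gbinom (2 * t) t)"
    by (simp add: Beta_eq_inverse_central_gbinom)
  finally show ?thesis .
qed

end
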